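(* Let $N\in\mathbb{C}^{m\times n}$ have rank $r$ and singular value decomposition $N=U\begin{pmatrix}\Sigma & 0\\ 0 & 0\end{pmatrix}V^{\ast}$, where $\Sigma\in\mathbb{C}^{r\times r}$ is diagonal with positive diagonal entries and $U\in\mathbb{C}^{m\times m}$, $V\in\mathbb{C}^{n\times n}$ are unitary. Let $X\in\mathbb{C}^{m\times m}$ and $Y\in\mathbb{C}^{n\times n}$ be nonsingular and let $M=XNY$. Assume that $X=U\begin{pmatrix}X_{1} & 0\\ X_{2} & X_{4}\end{pmatrix}U^{\ast}$ for some $X_{1}\in\mathbb{C}^{r\times r}$, $X_{2}\in\mathbb{C}^{(m-r)\times r}$, $X_{4}\in\mathbb{C}^{(m-r)\times(m-r)}$, and that $Y=V\begin{pmatrix}Y_{1} & Y_{3}\\ 0 & Y_{4}\end{pmatrix}V^{\ast}$ for some $Y_{1}\in\mathbb{C}^{r\times r}$, $Y_{3}\in\mathbb{C}^{r\times(n-r)}$, $Y_{4}\in\mathbb{C}^{(n-r)\times(n-r)}$. Then $$M^{\dagger}=(I+L^{\ast})(I+LL^{\ast})^{-1}N^{\dagger}N(Y^{-1}N^{\dagger}X^{-1})NN^{\dagger}(I+R^{\ast}R)^{-1}(I+R^{\ast}),$$ where $R=XE_{N}X^{-1}(E_{N}-I)$ and $L=(F_{N}-I)Y^{-1}F_{N}Y$.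
   Context: For a complex matrix $A$, $A^{\ast}$ is its conjugate transpose and $A^{\dagger}$ its Moore--Penrose inverse. $E_{A}:=I-AA^{\dagger}$ and $F_{A}:=I-A^{\dagger}A$ (the orthogonal projectors onto $\mathcal{N}(A^{\ast})$ and $\mathcal{N}(A)$). $I$ denotes an identity matrix of the appropriate size. *)

theory Defs
  imports "Jordan_Normal_Form.Schur_Decomposition" "Jordan_Normal_Form.DL_Rank"
begin

definition minv :: "complex mat \<Rightarrow> complex mat" where
  "minv A = (THE B. B \<in> carrier_mat (dim_row A) (dim_row A) \<and>
              A * B = 1\<^sub>m (dim_row A) \<and> B * A = 1\<^sub>m (dim_row A))"

definition mp_pinv :: "complex mat \<Rightarrow> complex mat" where
  "mp_pinv A = (THE G. G \<in> carrier_mat (dim_col A) (dim_row A) \<and>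
      A * G * A = A \<and> G * A * G = G \<and>
      mat_adjoint (A * G) = A * G \<and> mat_adjoint (G * A) = G * A)"

definition E_proj :: "complex mat \<Rightarrow> complex mat" where
  "E_proj A = 1\<^sub>m (dim_row A) - A * mp_pinv A"

definition F_proj :: "complex mat \<Rightarrow> complex mat" where
  "F_proj A = 1\<^sub>m (dim_col A) - mp_pinv A * A"

definition unitary_mat :: "complex mat \<Rightarrow> bool" where
  "unitary_mat U \<longleftrightarrow> (\<exists>k. U \<in> carrier_mat k k \<and>
     U * mat_adjoint U = 1\<^sub>m k \<and> mat_adjoint U * U = 1\<^sub>m k)"

end

(*
  Conjugation by the unitary factors U and V of the singular value decomposition commutes with
  every ingredient of the formula (Moore-Penrose inverse, the projectors E_N and F_N, inverses and
  adjoints), so it suffices to prove it for N = [Sigma 0; 0 0], X = [X1 0; X2 X4] and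
  Y = [Y1 Y3; 0 Y4]. There R = [0 0; K 0] and L = [0 J; 0 0] with K = X2 X1^-1 and J = Y1^-1 Y3,
  and the right-hand side collapses to C (C* C)^-1 W^-1 (B* B)^-1 B* with B = [I; K], C = [I; J*]
  and W = X1 Sigma Y1. As X N Y = B W C* is a full rank factorization, this is exactly its
  Moore-Penrose inverse.
*)

theory Submission
  imports Defs
begin

section \<open>Adjoints, inverses and the Penrose equations\<close>

abbreviation adj :: "complex mat \<Rightarrow> complex mat" where
  "adj A \<equiv> mat_adjoint A"

lemma adj_dim [simp]: "dim_row (adj A) = dim_col A" "dim_col (adj A) = dim_row A"
  unfolding mat_adjoint_def by auto

lemma index_adj [simp]:
  "i < dim_col A \<Longrightarrow> j < dim_row A \<Longrightarrow> adj A $$ (i, j) = cnj (A $$ (j, i))"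
  unfolding mat_adjoint_def by (auto simp: mat_of_rows_def)

lemma adj_carrier_mat [simp]: "A \<in> carrier_mat m n \<Longrightarrow> adj A \<in> carrier_mat n m"
  unfolding carrier_mat_def by auto

lemma adj_adj [simp]: "adj (adj A) = A"
  by (rule eq_matI) auto

lemma adj_one_mat [simp]: "adj (1\<^sub>m n) = 1\<^sub>m n"
  by (rule eq_matI) auto

lemma adj_zero_mat [simp]: "adj (0\<^sub>m m n) = 0\<^sub>m n m"
  by (rule eq_matI) auto

lemma adj_mult: "dim_col A = dim_row B \<Longrightarrow> adj (A * B) = adj B * adj A"
  by (rule eq_matI) (auto simp: scalar_prod_def cnj_sum mult.commute intro!: sum.cong)

lemma adj_four_block_mat [simp]:
  assumes "dim_row B = dim_row A" "dim_col C = dim_col A" "dim_row D = dim_row C" "dim_col D = dim_col B"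
  shows "adj (four_block_mat A B C D) = four_block_mat (adj A) (adj C) (adj B) (adj D)"
  by (rule eq_matI) (use assms in auto)

lemma mult_assoc_dim: "dim_col A = dim_row B \<Longrightarrow> dim_col B = dim_row C \<Longrightarrow> A * B * C = A * (B * C)"
  by (rule assoc_mult_mat[of _ "dim_row A" "dim_col A" _ "dim_col B" _ "dim_col C"]) auto

lemma left_mult_one_mat' [simp]: "dim_row (A :: complex mat) = n \<Longrightarrow> 1\<^sub>m n * A = A"
  by (metis carrier_mat_triv left_mult_one_mat)

lemma right_mult_one_mat' [simp]: "dim_col (A :: complex mat) = n \<Longrightarrow> A * 1\<^sub>m n = A"
  by (metis carrier_mat_triv right_mult_one_mat)

lemma adj_mult_self_hermitian: "adj (adj A * A) = adj A * A" "adj (A * adj A) = A * adj A"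
  by (simp_all add: adj_mult)

definition penrose :: "complex mat \<Rightarrow> complex mat \<Rightarrow> bool" where
  "penrose A G \<longleftrightarrow> A * G * A = A \<and> G * A * G = G \<and> adj (A * G) = A * G \<and> adj (G * A) = G * A"

lemma minv_eqI:
  assumes A: "A \<in> carrier_mat n n" and B: "B \<in> carrier_mat n n"
    and AB: "A * B = 1\<^sub>m n" and BA: "B * A = 1\<^sub>m n"
  shows "minv A = B"
  unfolding minv_def
proof (rule the_equality)
  fix B' assume "B' \<in> carrier_mat (dim_row A) (dim_row A) \<and> A * B' = 1\<^sub>m (dim_row A) \<and> B' * A = 1\<^sub>m (dim_row A)"
  hence B': "B' \<in> carrier_mat n n" "B' * A = 1\<^sub>m n" using A by auto
  have "B' = B' * (A * B)" using AB B' by simp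
  also have "\<dots> = (B' * A) * B" using A B B'(1) by (simp add: mult_assoc_dim)
  also have "\<dots> = B" using B' B by simp
  finally show "B' = B" .
qed (use A B AB BA in auto)

lemma mp_pinv_eqI:
  assumes A: "A \<in> carrier_mat m n" and G: "G \<in> carrier_mat n m" and P: "penrose A G"
  shows "mp_pinv A = G"
  unfolding mp_pinv_def
proof (rule the_equality)
  fix H assume "H \<in> carrier_mat (dim_col A) (dim_row A) \<and> A * H * A = A \<and> H * A * H = H \<and>
      adj (A * H) = A * H \<and> adj (H * A) = H * A"
  hence H: "H \<in> carrier_mat n m" and h1: "A * H * A = A" and h2: "H * A * H = H"
    and h3: "adj (A * H) = A * H" and h4: "adj (H * A) = H * A" using A by auto
  from P have g1: "A * G * A = A" and g2: "G * A * G = G"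
    and g3: "adj (A * G) = A * G" and g4: "adj (G * A) = G * A" unfolding penrose_def by auto
  note dims = carrier_matD[OF A] carrier_matD[OF G] carrier_matD[OF H]
  have "adj A = adj (A * G * A)" using g1 by simp
  also have "\<dots> = adj A * adj (A * G)" using dims by (simp add: adj_mult)
  finally have adjA_AG: "adj A = adj A * (A * G)" using g3 by simp
  have "adj A = adj (A * (H * A))" using h1 dims by (simp add: mult_assoc_dim)
  also have "\<dots> = adj (H * A) * adj A" using dims by (simp add: adj_mult)
  finally have adjA_HA: "adj A = (H * A) * adj A" using h4 by simp
  have "H = H * adj (A * H)" using h2 h3 dims by (simp add: mult_assoc_dim)
  also have "\<dots> = H * adj H * (adj A * (A * G))" using adjA_AG dims by (simp add: adj_mult mult_assoc_dim)
  also have "\<dots> = H * (adj (A * H) * (A * G))" using dims by (simp add: adj_mult mult_assoc_dim)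
  also have "\<dots> = (H * A * H) * A * G" using h3 dims by (simp add: mult_assoc_dim)
  finally have H_eq: "H = H * A * G" using h2 by simp
  have "G = adj (G * A) * G" using g2 g4 by simp
  also have "\<dots> = (H * A) * adj A * adj G * G" using adjA_HA dims by (simp add: adj_mult)
  also have "\<dots> = H * A * (adj (G * A) * G)" using dims by (simp add: adj_mult mult_assoc_dim)
  finally have G_eq: "G = H * A * G" using g2 g4 by simp
  show "H = G" using H_eq G_eq by simp
qed (use A G P in \<open>auto simp: penrose_def\<close>)

lemma invertible_mat_det_neq_0:
  assumes A: "A \<in> carrier_mat n n" and inv: "invertible_mat (A :: complex mat)"
  shows "det A \<noteq> 0"
proof -
  from inv A obtain B where AB: "A * B = 1\<^sub>m n" and BA: "B * A = 1\<^sub>m (dim_row B)"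
    unfolding invertible_mat_def inverts_mat_def by auto
  have B: "B \<in> carrier_mat n n"
    using arg_cong[OF AB, of dim_col] arg_cong[OF BA, of dim_col] A by auto
  have "det A * det B = 1" using det_mult[OF A B] AB by simp
  thus ?thesis by auto
qed

lemma minv_inverse:
  assumes A: "A \<in> carrier_mat n n" and det: "det A \<noteq> 0"
  shows "minv A \<in> carrier_mat n n" "A * minv A = 1\<^sub>m n" "minv A * A = 1\<^sub>m n"
proof -
  obtain B where "B \<in> carrier_mat n n" "A * B = 1\<^sub>m n" "B * A = 1\<^sub>m n"
    using det_non_zero_imp_unit[OF A det, of "()"] unfolding Units_def ring_mat_def by auto
  with minv_eqI[OF A] show "minv A \<in> carrier_mat n n" "A * minv A = 1\<^sub>m n" "minv A * A = 1\<^sub>m n"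
    by auto
qed

lemma minv_cancel:
  assumes "A \<in> carrier_mat n n" "det A \<noteq> 0" "dim_row Z = n"
  shows "A * (minv A * Z) = Z" "minv A * (A * Z) = Z"
  using minv_inverse[OF assms(1,2)] assms
  by (simp_all add: mult_assoc_dim[symmetric])

lemma adj_minv_hermitian:
  assumes A: "A \<in> carrier_mat n n" "det A \<noteq> 0" and herm: "adj A = A"
  shows "adj (minv A) = minv A"
proof -
  note inv = minv_inverse[OF A]
  have "adj (minv A) * A = 1\<^sub>m n"
    using arg_cong[OF inv(2), of adj] herm inv(1) A by (simp add: adj_mult)
  have "adj (minv A) = adj (minv A) * (A * minv A)" using inv by simp
  also have "\<dots> = minv A"
    using mult_assoc_dim[of "adj (minv A)" A "minv A"] \<open>adj (minv A) * A = 1\<^sub>m n\<close> inv A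
    by (simp add: carrier_matD)
  finally show ?thesis .
qed

lemma cscalar_prod_adj_mult_mat_vec:
  assumes v: "v \<in> carrier_vec q" and K: "K \<in> carrier_mat p q" and w: "w \<in> carrier_vec p"
  shows "v \<bullet>c (adj K *\<^sub>v w) = (K *\<^sub>v v) \<bullet>c w"
proof -
  have "v \<bullet>c (adj K *\<^sub>v w) = (\<Sum>i<q. v $ i * (\<Sum>j<p. K $$ (j,i) * cnj (w $ j)))"
    using v K w by (simp add: scalar_prod_def mult_mat_vec_def cnj_sum lessThan_atLeast0 mult.commute)
  also have "\<dots> = (\<Sum>j<p. (\<Sum>i<q. K $$ (j,i) * v $ i) * cnj (w $ j))"
    by (simp add: sum_distrib_left sum_distrib_right mult_ac sum.swap[of _ "{..<q}"])
  also have "\<dots> = (K *\<^sub>v v) \<bullet>c w"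
    using v K w by (simp add: scalar_prod_def mult_mat_vec_def lessThan_atLeast0)
  finally show ?thesis .
qed

lemma det_one_plus_adj_mult_neq_0:
  assumes K: "K \<in> carrier_mat p q"
  shows "det (1\<^sub>m q + adj K * K) \<noteq> 0"
proof
  assume "det (1\<^sub>m q + adj K * K) = 0"
  then obtain v where v: "v \<in> carrier_vec q" "v \<noteq> 0\<^sub>v q" and e: "(1\<^sub>m q + adj K * K) *\<^sub>v v = 0\<^sub>v q"
    using det_0_iff_vec_prod_zero[of "1\<^sub>m q + adj K * K" q] K
    by (metis add_carrier_mat adj_carrier_mat mult_carrier_mat one_carrier_mat)
  have Kv: "K *\<^sub>v v \<in> carrier_vec p" and KKv: "adj K *\<^sub>v (K *\<^sub>v v) \<in> carrier_vec q"
    using K by (auto intro!: carrier_vecI)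
  have "(1\<^sub>m q + adj K * K) *\<^sub>v v = v + adj K *\<^sub>v (K *\<^sub>v v)"
    using K v by (subst add_mult_distrib_mat_vec[of _ q q])
      (auto simp: assoc_mult_mat_vec[of _ q p])
  hence "0 = v \<bullet>c (v + adj K *\<^sub>v (K *\<^sub>v v))" using e v by (metis conjugate_zero_vec scalar_prod_right_zero)
  also have "\<dots> = v \<bullet>c v + v \<bullet>c (adj K *\<^sub>v (K *\<^sub>v v))"
    using v KKv by (simp add: conjugate_add_vec scalar_prod_add_distrib[of _ q])
  also have "\<dots> = v \<bullet>c v + (K *\<^sub>v v) \<bullet>c (K *\<^sub>v v)"
    using cscalar_prod_adj_mult_mat_vec[OF v(1) K Kv] by simp
  finally have "v \<bullet>c v = 0"
    by (metis add_nonneg_eq_0_iff conjugate_square_ge_0_vec)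
  thus False using v by simp
qed

lemma det_one_plus_mult_adj_neq_0:
  "J \<in> carrier_mat r c \<Longrightarrow> det (1\<^sub>m r + J * adj J) \<noteq> 0"
  using det_one_plus_adj_mult_neq_0[of "adj J" c r] by simp

lemma minv_one_plus_adj_mult_carrier_mat:
  "K \<in> carrier_mat p q \<Longrightarrow> minv (1\<^sub>m q + adj K * K) \<in> carrier_mat q q"
  by (intro minv_inverse(1) det_one_plus_adj_mult_neq_0) auto

lemma minv_one_plus_mult_adj_carrier_mat:
  "J \<in> carrier_mat r c \<Longrightarrow> minv (1\<^sub>m r + J * adj J) \<in> carrier_mat r r"
  by (intro minv_inverse(1) det_one_plus_mult_adj_neq_0) auto

lemma unitary_matD:
  assumes "unitary_mat U" "U \<in> carrier_mat k k"
  shows "U * adj U = 1\<^sub>m k" "adj U * U = 1\<^sub>m k"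
  using assms unfolding unitary_mat_def by auto

lemma unitary_cancel:
  assumes "unitary_mat U" "U \<in> carrier_mat k k" "dim_row Z = k"
  shows "U * (adj U * Z) = Z" "adj U * (U * Z) = Z"
  using unitary_matD[OF assms(1,2)] assms(2,3)
  by (simp_all add: mult_assoc_dim[symmetric] carrier_matD)

lemma penrose_unitary_conj:
  assumes U: "unitary_mat U" "U \<in> carrier_mat m m" and V: "unitary_mat V" "V \<in> carrier_mat n n"
    and A: "A \<in> carrier_mat m n" and G: "G \<in> carrier_mat n m" and P: "penrose A G"
  shows "penrose (U * A * adj V) (V * G * adj U)"
proof -
  from P have g1: "A * G * A = A" and g2: "G * A * G = G"
    and g3: "adj (A * G) = A * G" and g4: "adj (G * A) = G * A" unfolding penrose_def by auto
  note dims = carrier_matD[OF U(2)] carrier_matD[OF V(2)] carrier_matD[OF A] carrier_matD[OF G]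
  note cancel = unitary_cancel[OF U] unitary_cancel[OF V]
  have AG: "U * A * adj V * (V * G * adj U) = U * (A * G) * adj U"
    using dims by (simp add: mult_assoc_dim cancel)
  have GA: "V * G * adj U * (U * A * adj V) = V * (G * A) * adj V"
    using dims by (simp add: mult_assoc_dim cancel)
  have g1': "A * (G * (A * Z)) = A * Z" if "dim_row Z = n" for Z
    using arg_cong[OF g1, of "\<lambda>B. B * Z"] that dims by (simp add: mult_assoc_dim)
  have g2': "G * (A * (G * Z)) = G * Z" if "dim_row Z = m" for Z
    using arg_cong[OF g2, of "\<lambda>B. B * Z"] that dims by (simp add: mult_assoc_dim)
  show ?thesis unfolding penrose_def AG GA
    using dims g3 g4 by (simp add: mult_assoc_dim cancel g1' g2' adj_mult)
qed

lemma mp_pinv_unitary_conj: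
  assumes U: "unitary_mat U" "U \<in> carrier_mat m m" and V: "unitary_mat V" "V \<in> carrier_mat n n"
    and A: "A \<in> carrier_mat m n" and G: "G \<in> carrier_mat n m" and P: "penrose A G"
  shows "mp_pinv (U * A * adj V) = V * G * adj U"
  using U V A G by (intro mp_pinv_eqI[OF _ _ penrose_unitary_conj[OF assms]]) auto

(* The classical formula (B W C\<^sup>* )\<^sup>+ = (C\<^sup>* )\<^sup>+ W\<^sup>-\<^sup>1 B\<^sup>+ for a full rank factorization,
   with B\<^sup>+ = (B\<^sup>* B)\<^sup>-\<^sup>1 B\<^sup>* and (C\<^sup>* )\<^sup>+ = C (C\<^sup>* C)\<^sup>-\<^sup>1. *)
lemma penrose_full_rank_factorization:
  assumes B: "B \<in> carrier_mat m r" and W: "W \<in> carrier_mat r r" and C: "C \<in> carrier_mat n r"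
    and det_W: "det W \<noteq> 0" and det_B: "det (adj B * B) \<noteq> 0" and det_C: "det (adj C * C) \<noteq> 0"
  shows "penrose (B * W * adj C) (C * minv (adj C * C) * minv W * minv (adj B * B) * adj B)"
proof -
  define S where "S = minv (adj C * C)"
  define T where "T = minv (adj B * B)"
  have CC: "adj C * C \<in> carrier_mat r r" and BB: "adj B * B \<in> carrier_mat r r" using B C by auto
  have S: "S \<in> carrier_mat r r" and T: "T \<in> carrier_mat r r" and Wi: "minv W \<in> carrier_mat r r"
    unfolding S_def T_def using minv_inverse(1) CC BB det_B det_C W det_W by auto
  have S_herm: "adj S = S" unfolding S_def
    by (rule adj_minv_hermitian[OF CC det_C adj_mult_self_hermitian(1)])
  have T_herm: "adj T = T" unfolding T_def
    by (rule adj_minv_hermitian[OF BB det_B adj_mult_self_hermitian(1)])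
  note dims = carrier_matD[OF B] carrier_matD[OF W] carrier_matD[OF C]
    carrier_matD[OF S] carrier_matD[OF T] carrier_matD[OF Wi]
  have cancel_C: "adj C * (C * (S * Z)) = Z" "S * (adj C * (C * Z)) = Z" if "dim_row Z = r" for Z
    using minv_cancel[OF CC det_C that] that dims unfolding S_def by (simp_all add: mult_assoc_dim)
  have cancel_B: "adj B * (B * (T * Z)) = Z" "T * (adj B * (B * Z)) = Z" if "dim_row Z = r" for Z
    using minv_cancel[OF BB det_B that] that dims unfolding T_def by (simp_all add: mult_assoc_dim)
  note cancel = cancel_C cancel_B minv_cancel[OF W det_W]
  have MG: "B * W * adj C * (C * S * minv W * T * adj B) = B * (T * adj B)"
    using dims by (simp add: mult_assoc_dim cancel)
  have GM: "C * S * minv W * T * adj B * (B * W * adj C) = C * (S * adj C)"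
    using dims by (simp add: mult_assoc_dim cancel)
  show ?thesis
    unfolding penrose_def S_def[symmetric] T_def[symmetric] MG GM
    using dims S_herm T_herm by (simp add: mult_assoc_dim cancel adj_mult)
qed

section \<open>Block matrices\<close>

lemma mult_four_block_mat' [simp]:
  fixes A1 B1 C1 D1 A2 B2 C2 D2 :: "complex mat"
  assumes "dim_row B1 = dim_row A1" "dim_col C1 = dim_col A1" "dim_row D1 = dim_row C1" "dim_col D1 = dim_col B1"
    "dim_row A2 = dim_col A1" "dim_row B2 = dim_col A1" "dim_row C2 = dim_col B1" "dim_row D2 = dim_col B1"
    "dim_col C2 = dim_col A2" "dim_col D2 = dim_col B2"
  shows "four_block_mat A1 B1 C1 D1 * four_block_mat A2 B2 C2 D2
    = four_block_mat (A1 * A2 + B1 * C2) (A1 * B2 + B1 * D2) (C1 * A2 + D1 * C2) (C1 * B2 + D1 * D2)"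
  by (rule mult_four_block_mat[of _ "dim_row A1" "dim_col A1" _ "dim_col B1" _ "dim_row C1" _ _ "dim_col A2" _ "dim_col B2"])
    (auto intro!: carrier_matI simp: assms)

lemma add_four_block_mat' [simp]:
  fixes A1 B1 C1 D1 A2 B2 C2 D2 :: "complex mat"
  assumes "dim_row B1 = dim_row A1" "dim_col C1 = dim_col A1" "dim_row D1 = dim_row C1" "dim_col D1 = dim_col B1"
    "dim_row A2 = dim_row A1" "dim_col A2 = dim_col A1" "dim_row B2 = dim_row B1" "dim_col B2 = dim_col B1"
    "dim_row C2 = dim_row C1" "dim_col C2 = dim_col C1" "dim_row D2 = dim_row D1" "dim_col D2 = dim_col D1"
  shows "four_block_mat A1 B1 C1 D1 + four_block_mat A2 B2 C2 D2
    = four_block_mat (A1 + A2) (B1 + B2) (C1 + C2) (D1 + D2)"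
  by (rule eq_matI) (auto simp: assms)

lemma minus_four_block_mat' [simp]:
  fixes A1 B1 C1 D1 A2 B2 C2 D2 :: "complex mat"
  assumes "dim_row B1 = dim_row A1" "dim_col C1 = dim_col A1" "dim_row D1 = dim_row C1" "dim_col D1 = dim_col B1"
    "dim_row A2 = dim_row A1" "dim_col A2 = dim_col A1" "dim_row B2 = dim_row B1" "dim_col B2 = dim_col B1"
    "dim_row C2 = dim_row C1" "dim_col C2 = dim_col C1" "dim_row D2 = dim_row D1" "dim_col D2 = dim_col D1"
  shows "four_block_mat A1 B1 C1 D1 - four_block_mat A2 B2 C2 D2
    = four_block_mat (A1 - A2) (B1 - B2) (C1 - C2) (D1 - D2)"
  by (rule eq_matI) (auto simp: assms)

lemma four_block_mat_empty [simp]: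
  "dim_row (A :: complex mat) = p \<Longrightarrow> dim_col A = q \<Longrightarrow> four_block_mat A (0\<^sub>m p 0) (0\<^sub>m 0 q) (0\<^sub>m 0 0) = A"
  by (rule eq_matI) auto

lemma zero_mat_arith [simp]:
  fixes A :: "complex mat"
  assumes "dim_row A = a" "dim_col A = b"
  shows "A + 0\<^sub>m a b = A" "0\<^sub>m a b + A = A" "A - 0\<^sub>m a b = A" "0\<^sub>m a b - A = - A"
  by (rule eq_matI; use assms in auto)+

lemma uminus_mat_arith [simp]:
  fixes A :: "complex mat"
  shows "A + - A = 0\<^sub>m (dim_row A) (dim_col A)" "- A + A = 0\<^sub>m (dim_row A) (dim_col A)"
    "A - A = 0\<^sub>m (dim_row A) (dim_col A)" "- (- A) = A" "- (0\<^sub>m a b :: complex mat) = 0\<^sub>m a b"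
  by (rule eq_matI; auto)+

context
  fixes \<Sigma> :: "complex mat" and r b c :: nat
  assumes \<Sigma>: "\<Sigma> \<in> carrier_mat r r" "det \<Sigma> \<noteq> 0"
begin

lemma penrose_diag_block:
  "penrose (four_block_mat \<Sigma> (0\<^sub>m r c) (0\<^sub>m b r) (0\<^sub>m b c))
           (four_block_mat (minv \<Sigma>) (0\<^sub>m r b) (0\<^sub>m c r) (0\<^sub>m c b))"
  using \<Sigma> minv_inverse[OF \<Sigma>] carrier_matD[OF \<Sigma>(1)] carrier_matD[OF minv_inverse(1)[OF \<Sigma>]]
  unfolding penrose_def by (simp add: mult_assoc_dim minv_cancel)

lemma mp_pinv_diag_block:
  "mp_pinv (four_block_mat \<Sigma> (0\<^sub>m r c) (0\<^sub>m b r) (0\<^sub>m b c))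
     = four_block_mat (minv \<Sigma>) (0\<^sub>m r b) (0\<^sub>m c r) (0\<^sub>m c b)"
  using \<Sigma> minv_inverse(1)[OF \<Sigma>] by (intro mp_pinv_eqI[OF _ _ penrose_diag_block]) auto

lemma E_proj_diag_block:
  "E_proj (four_block_mat \<Sigma> (0\<^sub>m r c) (0\<^sub>m b r) (0\<^sub>m b c))
     = four_block_mat (0\<^sub>m r r) (0\<^sub>m r b) (0\<^sub>m b r) (1\<^sub>m b)"
  unfolding E_proj_def mp_pinv_diag_block
  using \<Sigma> minv_inverse[OF \<Sigma>] carrier_matD[OF \<Sigma>(1)] carrier_matD[OF minv_inverse(1)[OF \<Sigma>]]
  by (simp flip: four_block_one_mat)

lemma F_proj_diag_block:
  "F_proj (four_block_mat \<Sigma> (0\<^sub>m r c) (0\<^sub>m b r) (0\<^sub>m b c))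
     = four_block_mat (0\<^sub>m r r) (0\<^sub>m r c) (0\<^sub>m c r) (1\<^sub>m c)"
  unfolding F_proj_def mp_pinv_diag_block
  using \<Sigma> minv_inverse[OF \<Sigma>] carrier_matD[OF \<Sigma>(1)] carrier_matD[OF minv_inverse(1)[OF \<Sigma>]]
  by (simp flip: four_block_one_mat)

end

lemma minv_lower_triangular_block:
  assumes A: "A \<in> carrier_mat r r" "det A \<noteq> 0" and B: "B \<in> carrier_mat b r"
    and C: "C \<in> carrier_mat b b" "det C \<noteq> 0"
  shows "minv (four_block_mat A (0\<^sub>m r b) B C)
     = four_block_mat (minv A) (0\<^sub>m r b) (- (minv C * B * minv A)) (minv C)"
  using A B C minv_inverse[OF A] minv_inverse[OF C]
    carrier_matD[OF A(1)] carrier_matD[OF B] carrier_matD[OF C(1)]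
    carrier_matD[OF minv_inverse(1)[OF A]] carrier_matD[OF minv_inverse(1)[OF C]]
  by (intro minv_eqI[of _ "r + b"])
    (auto simp: mult_assoc_dim minv_cancel[OF A] minv_cancel[OF C] simp flip: four_block_one_mat)

lemma minv_upper_triangular_block:
  assumes A: "A \<in> carrier_mat r r" "det A \<noteq> 0" and B: "B \<in> carrier_mat r c"
    and C: "C \<in> carrier_mat c c" "det C \<noteq> 0"
  shows "minv (four_block_mat A B (0\<^sub>m c r) C)
     = four_block_mat (minv A) (- (minv A * B * minv C)) (0\<^sub>m c r) (minv C)"
  using A B C minv_inverse[OF A] minv_inverse[OF C]
    carrier_matD[OF A(1)] carrier_matD[OF B] carrier_matD[OF C(1)]
    carrier_matD[OF minv_inverse(1)[OF A]] carrier_matD[OF minv_inverse(1)[OF C]]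
  by (intro minv_eqI[of _ "r + c"])
    (auto simp: mult_assoc_dim minv_cancel[OF A] minv_cancel[OF C] simp flip: four_block_one_mat)

lemma minv_one_plus_adj_mult_lower_block:
  assumes K: "K \<in> carrier_mat b r"
  defines "R \<equiv> four_block_mat (0\<^sub>m r r) (0\<^sub>m r b) K (0\<^sub>m b b)"
  shows "minv (1\<^sub>m (r + b) + adj R * R)
     = four_block_mat (minv (1\<^sub>m r + adj K * K)) (0\<^sub>m r b) (0\<^sub>m b r) (1\<^sub>m b)"
proof -
  have KK: "1\<^sub>m r + adj K * K \<in> carrier_mat r r" using K by auto
  note inv = minv_inverse[OF KK det_one_plus_adj_mult_neq_0[OF K]]
  show ?thesis
    unfolding R_def using K inv carrier_matD[OF K] carrier_matD[OF inv(1)]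
    by (intro minv_eqI[of _ "r + b"]) (auto simp flip: four_block_one_mat)
qed

lemma minv_one_plus_mult_adj_upper_block:
  assumes J: "J \<in> carrier_mat r c"
  defines "L \<equiv> four_block_mat (0\<^sub>m r r) J (0\<^sub>m c r) (0\<^sub>m c c)"
  shows "minv (1\<^sub>m (r + c) + L * adj L)
     = four_block_mat (minv (1\<^sub>m r + J * adj J)) (0\<^sub>m r c) (0\<^sub>m c r) (1\<^sub>m c)"
proof -
  have JJ: "1\<^sub>m r + J * adj J \<in> carrier_mat r r" using J by auto
  note inv = minv_inverse[OF JJ det_one_plus_mult_adj_neq_0[OF J]]
  show ?thesis
    unfolding L_def using J inv carrier_matD[OF J] carrier_matD[OF inv(1)]
    by (intro minv_eqI[of _ "r + c"]) (auto simp flip: four_block_one_mat)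
qed

section \<open>The formula in block coordinates\<close>

definition pinv_R :: "complex mat \<Rightarrow> complex mat \<Rightarrow> complex mat" where
  "pinv_R N X = X * E_proj N * minv X * (E_proj N - 1\<^sub>m (dim_row N))"

definition pinv_L :: "complex mat \<Rightarrow> complex mat \<Rightarrow> complex mat" where
  "pinv_L N Y = (F_proj N - 1\<^sub>m (dim_col N)) * minv Y * F_proj N * Y"

(* The middle factor of the formula, grouped so that it can be evaluated on its own. *)
definition pinv_core :: "complex mat \<Rightarrow> complex mat \<Rightarrow> complex mat \<Rightarrow> complex mat" where
  "pinv_core N X Y = mp_pinv N * N * (minv Y * mp_pinv N * minv X) * N * mp_pinv N"

definition pinv_formula :: "complex mat \<Rightarrow> complex mat \<Rightarrow> complex mat \<Rightarrow> complex mat" where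
  "pinv_formula N X Y =
     (1\<^sub>m (dim_col N) + adj (pinv_L N Y)) * minv (1\<^sub>m (dim_col N) + pinv_L N Y * adj (pinv_L N Y))
     * pinv_core N X Y
     * minv (1\<^sub>m (dim_row N) + adj (pinv_R N X) * pinv_R N X) * (1\<^sub>m (dim_row N) + adj (pinv_R N X))"

context
  fixes \<Sigma> :: "complex mat" and r b c :: nat
  assumes \<Sigma>: "\<Sigma> \<in> carrier_mat r r" "det \<Sigma> \<noteq> 0"
begin

lemma pinv_R_block:
  assumes A: "A \<in> carrier_mat r r" "det A \<noteq> 0" and B: "B \<in> carrier_mat b r"
    and C: "C \<in> carrier_mat b b" "det C \<noteq> 0"
  shows "pinv_R (four_block_mat \<Sigma> (0\<^sub>m r c) (0\<^sub>m b r) (0\<^sub>m b c)) (four_block_mat A (0\<^sub>m r b) B C)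
     = four_block_mat (0\<^sub>m r r) (0\<^sub>m r b) (B * minv A) (0\<^sub>m b b)"
  unfolding pinv_R_def E_proj_diag_block[OF \<Sigma>] minv_lower_triangular_block[OF A B C]
  using \<Sigma> A B C carrier_matD[OF A(1)] carrier_matD[OF B] carrier_matD[OF C(1)]
    carrier_matD[OF minv_inverse(1)[OF A]] carrier_matD[OF minv_inverse(1)[OF C]]
  by (simp add: mult_assoc_dim minv_cancel[OF C] minv_inverse(2)[OF C] flip: four_block_one_mat)

lemma pinv_L_block:
  assumes A: "A \<in> carrier_mat r r" "det A \<noteq> 0" and B: "B \<in> carrier_mat r c"
    and C: "C \<in> carrier_mat c c" "det C \<noteq> 0"
  shows "pinv_L (four_block_mat \<Sigma> (0\<^sub>m r c) (0\<^sub>m b r) (0\<^sub>m b c)) (four_block_mat A B (0\<^sub>m c r) C)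
     = four_block_mat (0\<^sub>m r r) (minv A * B) (0\<^sub>m c r) (0\<^sub>m c c)"
  unfolding pinv_L_def F_proj_diag_block[OF \<Sigma>] minv_upper_triangular_block[OF A B C]
  using \<Sigma> A B C carrier_matD[OF A(1)] carrier_matD[OF B] carrier_matD[OF C(1)]
    carrier_matD[OF minv_inverse(1)[OF A]] carrier_matD[OF minv_inverse(1)[OF C]]
  by (simp add: mult_assoc_dim minv_cancel[OF C] minv_inverse(3)[OF C] flip: four_block_one_mat)

end

lemma minv_mult3:
  assumes "A \<in> carrier_mat n n" "det A \<noteq> 0" "B \<in> carrier_mat n n" "det B \<noteq> 0"
    "C \<in> carrier_mat n n" "det C \<noteq> 0"
  shows "minv (A * B * C) = minv C * minv B * minv A"
  using assms minv_inverse[OF assms(1,2)] minv_inverse[OF assms(3,4)] minv_inverse[OF assms(5,6)]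
  by (intro minv_eqI[of _ n])
    (auto simp: mult_assoc_dim carrier_matD minv_cancel[OF assms(1,2)] minv_cancel[OF assms(3,4)]
      minv_cancel[OF assms(5,6)])

(* The block column [I; K]: the right-hand blocks of width 0 are empty. *)
definition stack_id :: "nat \<Rightarrow> complex mat \<Rightarrow> complex mat" where
  "stack_id r K = four_block_mat (1\<^sub>m r) (0\<^sub>m r 0) K (0\<^sub>m (dim_row K) 0)"

lemma stack_id_carrier_mat: "K \<in> carrier_mat k r \<Longrightarrow> stack_id r K \<in> carrier_mat (r + k) r"
  unfolding stack_id_def by auto

lemma adj_stack_id_mult_stack_id:
  "K \<in> carrier_mat k r \<Longrightarrow> adj (stack_id r K) * stack_id r K = 1\<^sub>m r + adj K * K"
  unfolding stack_id_def by (simp add: carrier_matD)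

context
  fixes \<Sigma> X1 X2 X4 Y1 Y3 Y4 :: "complex mat" and r b c :: nat
  assumes \<Sigma>: "\<Sigma> \<in> carrier_mat r r" "det \<Sigma> \<noteq> 0"
    and X1: "X1 \<in> carrier_mat r r" "det X1 \<noteq> 0" and X2: "X2 \<in> carrier_mat b r"
    and X4: "X4 \<in> carrier_mat b b" "det X4 \<noteq> 0"
    and Y1: "Y1 \<in> carrier_mat r r" "det Y1 \<noteq> 0" and Y3: "Y3 \<in> carrier_mat r c"
    and Y4: "Y4 \<in> carrier_mat c c" "det Y4 \<noteq> 0"
begin

private lemma block_carriers:
  "minv \<Sigma> \<in> carrier_mat r r" "minv X1 \<in> carrier_mat r r" "minv X4 \<in> carrier_mat b b"
  "minv Y1 \<in> carrier_mat r r" "minv Y4 \<in> carrier_mat c c"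
  "X2 * minv X1 \<in> carrier_mat b r" "adj (minv Y1 * Y3) \<in> carrier_mat c r"
  using minv_inverse(1)[OF \<Sigma>] minv_inverse(1)[OF X1] minv_inverse(1)[OF X4]
    minv_inverse(1)[OF Y1] minv_inverse(1)[OF Y4] X2 Y3
  by (auto intro!: adj_carrier_mat)

lemma block_full_rank_factorization:
  "four_block_mat X1 (0\<^sub>m r b) X2 X4 * four_block_mat \<Sigma> (0\<^sub>m r c) (0\<^sub>m b r) (0\<^sub>m b c)
     * four_block_mat Y1 Y3 (0\<^sub>m c r) Y4
   = stack_id r (X2 * minv X1) * (X1 * \<Sigma> * Y1) * adj (stack_id r (adj (minv Y1 * Y3)))"
proof -
  have "stack_id r (X2 * minv X1) * (X1 * \<Sigma> * Y1) * adj (stack_id r (adj (minv Y1 * Y3)))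
      = stack_id r (X2 * minv X1) * four_block_mat (X1 * \<Sigma> * Y1) (0\<^sub>m r 0) (0\<^sub>m 0 r) (0\<^sub>m 0 0)
        * adj (stack_id r (adj (minv Y1 * Y3)))"
    using \<Sigma> X1 Y1 by simp
  also have "\<dots> = four_block_mat X1 (0\<^sub>m r b) X2 X4 * four_block_mat \<Sigma> (0\<^sub>m r c) (0\<^sub>m b r) (0\<^sub>m b c)
     * four_block_mat Y1 Y3 (0\<^sub>m c r) Y4"
    unfolding stack_id_def
    using block_carriers \<Sigma> X1 X2 X4 Y1 Y3 Y4 minv_inverse(3)[OF X1] minv_inverse(2)[OF Y1]
    by (simp add: carrier_matD mult_assoc_dim minv_cancel[OF X1] minv_cancel[OF Y1]
        del: four_block_mat_empty)
  finally show ?thesis ..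
qed

lemma pinv_core_block:
  "pinv_core (four_block_mat \<Sigma> (0\<^sub>m r c) (0\<^sub>m b r) (0\<^sub>m b c)) (four_block_mat X1 (0\<^sub>m r b) X2 X4)
     (four_block_mat Y1 Y3 (0\<^sub>m c r) Y4)
   = four_block_mat (minv (X1 * \<Sigma> * Y1)) (0\<^sub>m r b) (0\<^sub>m c r) (0\<^sub>m c b)"
  unfolding pinv_core_def mp_pinv_diag_block[OF \<Sigma>] minv_lower_triangular_block[OF X1 X2 X4]
    minv_upper_triangular_block[OF Y1 Y3 Y4] minv_mult3[OF X1 \<Sigma> Y1]
  using block_carriers \<Sigma> X1 X2 X4 Y1 Y3 Y4 minv_inverse[OF \<Sigma>]
  by (simp add: carrier_matD mult_assoc_dim minv_cancel[OF \<Sigma>] minv_cancel[OF X4] minv_cancel[OF Y4])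

lemma pinv_formula_block:
  defines "K \<equiv> X2 * minv X1" and "J \<equiv> minv Y1 * Y3"
  shows "pinv_formula (four_block_mat \<Sigma> (0\<^sub>m r c) (0\<^sub>m b r) (0\<^sub>m b c)) (four_block_mat X1 (0\<^sub>m r b) X2 X4)
     (four_block_mat Y1 Y3 (0\<^sub>m c r) Y4)
   = stack_id r (adj J) * minv (1\<^sub>m r + J * adj J) * minv (X1 * \<Sigma> * Y1)
     * minv (1\<^sub>m r + adj K * K) * adj (stack_id r K)"
    (is "pinv_formula ?D ?X ?Y = _")
proof -
  have K: "K \<in> carrier_mat b r" and J: "adj J \<in> carrier_mat c r"
    unfolding K_def J_def using block_carriers by auto
  hence J': "J \<in> carrier_mat r c" by (metis adj_adj adj_carrier_mat)
  define S where "S = minv (1\<^sub>m r + J * adj J)"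
  define T where "T = minv (1\<^sub>m r + adj K * K)"
  define Wi where "Wi = minv (X1 * \<Sigma> * Y1)"
  have S: "S \<in> carrier_mat r r" and T: "T \<in> carrier_mat r r" and Wi: "Wi \<in> carrier_mat r r"
    unfolding S_def T_def Wi_def
    using minv_inverse(1)[OF _ det_one_plus_mult_adj_neq_0[OF J']]
      minv_inverse(1)[OF _ det_one_plus_adj_mult_neq_0[OF K]] minv_mult3[OF X1 \<Sigma> Y1]
      add_carrier_mat[OF mult_carrier_mat[OF J' J]] add_carrier_mat[OF mult_carrier_mat[OF adj_carrier_mat[OF K] K]]
      block_carriers
    by auto
  have dims: "dim_row ?D = r + b" "dim_col ?D = r + c" using \<Sigma> by auto
  have R: "pinv_R ?D ?X = four_block_mat (0\<^sub>m r r) (0\<^sub>m r b) K (0\<^sub>m b b)"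
    unfolding K_def by (rule pinv_R_block[OF \<Sigma> X1 X2 X4])
  have L: "pinv_L ?D ?Y = four_block_mat (0\<^sub>m r r) J (0\<^sub>m c r) (0\<^sub>m c c)"
    unfolding J_def by (rule pinv_L_block[OF \<Sigma> Y1 Y3 Y4])
  have "pinv_formula ?D ?X ?Y
      = four_block_mat (1\<^sub>m r) (0\<^sub>m r c) (adj J) (1\<^sub>m c) * four_block_mat S (0\<^sub>m r c) (0\<^sub>m c r) (1\<^sub>m c)
        * four_block_mat Wi (0\<^sub>m r b) (0\<^sub>m c r) (0\<^sub>m c b) * four_block_mat T (0\<^sub>m r b) (0\<^sub>m b r) (1\<^sub>m b)
        * four_block_mat (1\<^sub>m r) (adj K) (0\<^sub>m b r) (1\<^sub>m b)"
    unfolding pinv_formula_def dims R L pinv_core_block minv_one_plus_adj_mult_lower_block[OF K]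
      minv_one_plus_mult_adj_upper_block[OF J'] S_def[symmetric] T_def[symmetric] Wi_def[symmetric]
    using K J' by (simp flip: four_block_one_mat)
  also have "\<dots> = stack_id r (adj J) * four_block_mat (S * Wi * T) (0\<^sub>m r 0) (0\<^sub>m 0 r) (0\<^sub>m 0 0)
      * adj (stack_id r K)"
    unfolding stack_id_def using S T Wi J J' K
    by (simp add: mult_assoc_dim carrier_matD del: four_block_mat_empty)
  finally show ?thesis
    unfolding S_def[symmetric] T_def[symmetric] Wi_def[symmetric]
    using S T Wi stack_id_carrier_mat[OF J] stack_id_carrier_mat[OF K]
    by (simp add: mult_assoc_dim carrier_matD)
qed

lemma penrose_pinv_formula_block:
  "penrose (four_block_mat X1 (0\<^sub>m r b) X2 X4 * four_block_mat \<Sigma> (0\<^sub>m r c) (0\<^sub>m b r) (0\<^sub>m b c)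
       * four_block_mat Y1 Y3 (0\<^sub>m c r) Y4)
     (pinv_formula (four_block_mat \<Sigma> (0\<^sub>m r c) (0\<^sub>m b r) (0\<^sub>m b c)) (four_block_mat X1 (0\<^sub>m r b) X2 X4)
       (four_block_mat Y1 Y3 (0\<^sub>m c r) Y4))"
proof -
  have K: "X2 * minv X1 \<in> carrier_mat b r" and J: "adj (minv Y1 * Y3) \<in> carrier_mat c r"
    using block_carriers by auto
  have W: "X1 * \<Sigma> * Y1 \<in> carrier_mat r r" "det (X1 * \<Sigma> * Y1) \<noteq> 0"
    using X1 \<Sigma> Y1 by (auto simp: det_mult)
  show ?thesis
    unfolding block_full_rank_factorization pinv_formula_block
    using penrose_full_rank_factorization[OF stack_id_carrier_mat[OF K] W(1) stack_id_carrier_mat[OF J] W(2)]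
      det_one_plus_adj_mult_neq_0[OF K] det_one_plus_adj_mult_neq_0[OF J]
    by (simp add: adj_stack_id_mult_stack_id[OF K] adj_stack_id_mult_stack_id[OF J])
qed

end

section \<open>Unitary changes of coordinates\<close>

lemma unitary_conj_mult:
  assumes "unitary_mat U" "U \<in> carrier_mat k k" "dim_col A = k" "dim_row B = k"
    "dim_col P = dim_row A" "dim_col B = dim_row Q"
  shows "P * A * adj U * (U * B * Q) = P * (A * B) * Q"
  using assms unitary_cancel[OF assms(1,2), of "B * Q"] by (simp add: mult_assoc_dim)

lemma adj_mult3:
  "dim_col P = dim_row A \<Longrightarrow> dim_col A = dim_col Q \<Longrightarrow> adj (P * A * adj Q) = Q * adj A * adj P"
  by (simp add: adj_mult mult_assoc_dim)

context
  fixes U :: "complex mat" and k :: nat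
  assumes U: "unitary_mat U" "U \<in> carrier_mat k k"
begin

lemma one_plus_unitary_conj:
  assumes A: "A \<in> carrier_mat k k"
  shows "1\<^sub>m k + U * A * adj U = U * (1\<^sub>m k + A) * adj U"
proof -
  have "U * (1\<^sub>m k + A) * adj U = (U + U * A) * adj U"
    using U A by (simp add: mult_add_distrib_mat[OF U(2) one_carrier_mat A])
  also have "\<dots> = 1\<^sub>m k + U * A * adj U"
    using U A unitary_matD[OF U] by (simp add: add_mult_distrib_mat[of _ k k _ _ k])
  finally show ?thesis by simp
qed

lemma unitary_conj_minus_one:
  assumes A: "A \<in> carrier_mat k k"
  shows "U * A * adj U - 1\<^sub>m k = U * (A - 1\<^sub>m k) * adj U"
proof -
  have "U * (A - 1\<^sub>m k) * adj U = (U * A - U) * adj U"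
    using U A by (simp add: mult_minus_distrib_mat[OF U(2) A one_carrier_mat])
  also have "\<dots> = U * A * adj U - 1\<^sub>m k"
    using U A unitary_matD[OF U] by (simp add: minus_mult_distrib_mat[of _ k k _ _ k])
  finally show ?thesis by simp
qed

lemma one_minus_unitary_conj:
  assumes A: "A \<in> carrier_mat k k"
  shows "1\<^sub>m k - U * A * adj U = U * (1\<^sub>m k - A) * adj U"
proof -
  have "U * (1\<^sub>m k - A) * adj U = (U - U * A) * adj U"
    using U A by (simp add: mult_minus_distrib_mat[OF U(2) one_carrier_mat A])
  also have "\<dots> = 1\<^sub>m k - U * A * adj U"
    using U A unitary_matD[OF U] by (simp add: minus_mult_distrib_mat[of _ k k _ _ k])
  finally show ?thesis by simp
qed

lemma minv_unitary_conj:
  assumes A: "A \<in> carrier_mat k k" "det A \<noteq> 0"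
  shows "minv (U * A * adj U) = U * minv A * adj U"
proof (rule minv_eqI[of _ k])
  note inv = minv_inverse[OF A]
  note dims = carrier_matD[OF U(2)] carrier_matD[OF A(1)] carrier_matD[OF inv(1)]
  show "U * A * adj U * (U * minv A * adj U) = 1\<^sub>m k" "U * minv A * adj U * (U * A * adj U) = 1\<^sub>m k"
    using dims inv unitary_matD[OF U] by (simp_all add: unitary_conj_mult[OF U])
qed (use U A minv_inverse(1)[OF A] in auto)

end

context
  fixes D G :: "complex mat" and m n :: nat
  assumes D: "D \<in> carrier_mat m n" and G: "G \<in> carrier_mat n m" and DG: "penrose D G"
begin

lemma E_proj_carrier_mat: "E_proj D \<in> carrier_mat m m"
  unfolding E_proj_def mp_pinv_eqI[OF D G DG] using D G by auto

lemma F_proj_carrier_mat: "F_proj D \<in> carrier_mat n n"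
  unfolding F_proj_def mp_pinv_eqI[OF D G DG] using D G by auto

lemma pinv_R_carrier_mat: "X \<in> carrier_mat m m \<Longrightarrow> det X \<noteq> 0 \<Longrightarrow> pinv_R D X \<in> carrier_mat m m"
  unfolding pinv_R_def using minv_inverse(1)[of X m] E_proj_carrier_mat carrier_matD[OF D]
  by (auto intro!: carrier_matI simp: carrier_matD)

lemma pinv_L_carrier_mat: "Y \<in> carrier_mat n n \<Longrightarrow> det Y \<noteq> 0 \<Longrightarrow> pinv_L D Y \<in> carrier_mat n n"
  unfolding pinv_L_def using minv_inverse(1)[of Y n] F_proj_carrier_mat carrier_matD[OF D]
  by (auto intro!: carrier_matI simp: carrier_matD)

lemma pinv_core_carrier_mat:
  "X \<in> carrier_mat m m \<Longrightarrow> det X \<noteq> 0 \<Longrightarrow> Y \<in> carrier_mat n n \<Longrightarrow> det Y \<noteq> 0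
    \<Longrightarrow> pinv_core D X Y \<in> carrier_mat n m"
  unfolding pinv_core_def mp_pinv_eqI[OF D G DG] using minv_inverse(1)[of X m] minv_inverse(1)[of Y n] D G
  by auto

context
  fixes X Y :: "complex mat"
  assumes X: "X \<in> carrier_mat m m" "det X \<noteq> 0" and Y: "Y \<in> carrier_mat n n" "det Y \<noteq> 0"
begin

lemma pinv_formula_carrier_mat: "pinv_formula D X Y \<in> carrier_mat n m"
  unfolding pinv_formula_def
  using D pinv_core_carrier_mat[OF X Y]
    minv_one_plus_adj_mult_carrier_mat[OF pinv_R_carrier_mat[OF X]]
    minv_one_plus_mult_adj_carrier_mat[OF pinv_L_carrier_mat[OF Y]]
    pinv_R_carrier_mat[OF X] pinv_L_carrier_mat[OF Y]
  by (auto intro!: carrier_matI simp: carrier_matD)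

lemma pinv_formula_expand:
  "pinv_formula D X Y =
     (1\<^sub>m n + adj (pinv_L D Y)) * minv (1\<^sub>m n + pinv_L D Y * adj (pinv_L D Y))
     * mp_pinv D * D * (minv Y * mp_pinv D * minv X) * D * mp_pinv D
     * minv (1\<^sub>m m + adj (pinv_R D X) * pinv_R D X) * (1\<^sub>m m + adj (pinv_R D X))"
  unfolding pinv_formula_def pinv_core_def mp_pinv_eqI[OF D G DG]
  using D G minv_one_plus_adj_mult_carrier_mat[OF pinv_R_carrier_mat[OF X]]
    minv_one_plus_mult_adj_carrier_mat[OF pinv_L_carrier_mat[OF Y]]
    carrier_matD[OF pinv_R_carrier_mat[OF X]]
    carrier_matD[OF pinv_L_carrier_mat[OF Y]] minv_inverse(1)[OF X] minv_inverse(1)[OF Y]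
  by (simp add: mult_assoc_dim carrier_matD)

end

context
  fixes U V :: "complex mat"
  assumes U: "unitary_mat U" "U \<in> carrier_mat m m" and V: "unitary_mat V" "V \<in> carrier_mat n n"
begin

lemma mp_pinv_unitary_conj': "mp_pinv (U * D * adj V) = V * mp_pinv D * adj U"
  using mp_pinv_unitary_conj[OF U V D G DG] mp_pinv_eqI[OF D G DG] by simp

lemma E_proj_unitary_conj: "E_proj (U * D * adj V) = U * E_proj D * adj U"
proof -
  have "U * D * adj V * mp_pinv (U * D * adj V) = U * (D * mp_pinv D) * adj U"
    unfolding mp_pinv_unitary_conj' mp_pinv_eqI[OF D G DG]
    using U V D G by (simp add: unitary_conj_mult[OF V] carrier_matD)
  thus ?thesis
    unfolding E_proj_def mp_pinv_eqI[OF D G DG] using U D G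
    by (simp add: one_minus_unitary_conj[OF U] carrier_matD)
qed

lemma F_proj_unitary_conj: "F_proj (U * D * adj V) = V * F_proj D * adj V"
proof -
  have "mp_pinv (U * D * adj V) * (U * D * adj V) = V * (mp_pinv D * D) * adj V"
    unfolding mp_pinv_unitary_conj' mp_pinv_eqI[OF D G DG]
    using U V D G by (simp add: unitary_conj_mult[OF U] carrier_matD)
  thus ?thesis
    unfolding F_proj_def mp_pinv_eqI[OF D G DG] using V D G
    by (simp add: one_minus_unitary_conj[OF V] carrier_matD)
qed

lemma pinv_R_unitary_conj:
  assumes X: "X \<in> carrier_mat m m" "det X \<noteq> 0"
  shows "pinv_R (U * D * adj V) (U * X * adj U) = U * pinv_R D X * adj U"
  unfolding pinv_R_def E_proj_unitary_conj minv_unitary_conj[OF U X]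
  using U D X E_proj_carrier_mat minv_inverse(1)[OF X]
  by (simp add: unitary_conj_minus_one[OF U] unitary_conj_mult[OF U] carrier_matD)

lemma pinv_L_unitary_conj:
  assumes Y: "Y \<in> carrier_mat n n" "det Y \<noteq> 0"
  shows "pinv_L (U * D * adj V) (V * Y * adj V) = V * pinv_L D Y * adj V"
  unfolding pinv_L_def F_proj_unitary_conj minv_unitary_conj[OF V Y]
  using U V D Y F_proj_carrier_mat minv_inverse(1)[OF Y]
  by (simp add: unitary_conj_minus_one[OF V] unitary_conj_mult[OF V] carrier_matD)

lemma pinv_core_unitary_conj:
  assumes X: "X \<in> carrier_mat m m" "det X \<noteq> 0" and Y: "Y \<in> carrier_mat n n" "det Y \<noteq> 0"
  shows "pinv_core (U * D * adj V) (U * X * adj U) (V * Y * adj V) = V * pinv_core D X Y * adj U"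
  unfolding pinv_core_def mp_pinv_unitary_conj' minv_unitary_conj[OF U X] minv_unitary_conj[OF V Y]
    mp_pinv_eqI[OF D G DG]
  using U V D G X Y minv_inverse(1)[OF X] minv_inverse(1)[OF Y]
  by (simp add: unitary_conj_mult[OF U] unitary_conj_mult[OF V] carrier_matD)

lemma pinv_formula_unitary_conj:
  assumes X: "X \<in> carrier_mat m m" "det X \<noteq> 0" and Y: "Y \<in> carrier_mat n n" "det Y \<noteq> 0"
  shows "pinv_formula (U * D * adj V) (U * X * adj U) (V * Y * adj V) = V * pinv_formula D X Y * adj U"
proof -
  define R where "R = pinv_R D X"
  define L where "L = pinv_L D Y"
  have R: "R \<in> carrier_mat m m" and L: "L \<in> carrier_mat n n"
    unfolding R_def L_def using pinv_R_carrier_mat[OF X] pinv_L_carrier_mat[OF Y] .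
  have RR: "adj R * R \<in> carrier_mat m m" and LL: "L * adj L \<in> carrier_mat n n"
    using R L by auto
  note dims = carrier_matD[OF U(2)] carrier_matD[OF V(2)] carrier_matD[OF R] carrier_matD[OF L]
    carrier_matD[OF pinv_core_carrier_mat[OF X Y]]
    carrier_matD[OF minv_one_plus_adj_mult_carrier_mat[OF R]]
    carrier_matD[OF minv_one_plus_mult_adj_carrier_mat[OF L]]
  have "1\<^sub>m m + adj (U * R * adj U) * (U * R * adj U) = U * (1\<^sub>m m + adj R * R) * adj U"
    using dims R by (simp add: adj_mult3 unitary_conj_mult[OF U] one_plus_unitary_conj[OF U RR])
  hence R_inv: "minv (1\<^sub>m m + adj (U * R * adj U) * (U * R * adj U)) = U * minv (1\<^sub>m m + adj R * R) * adj U"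
    using minv_unitary_conj[OF U _ det_one_plus_adj_mult_neq_0[OF R]] RR by simp
  have "1\<^sub>m n + (V * L * adj V) * adj (V * L * adj V) = V * (1\<^sub>m n + L * adj L) * adj V"
    using dims L by (simp add: adj_mult3 unitary_conj_mult[OF V] one_plus_unitary_conj[OF V LL])
  hence L_inv: "minv (1\<^sub>m n + (V * L * adj V) * adj (V * L * adj V)) = V * minv (1\<^sub>m n + L * adj L) * adj V"
    using minv_unitary_conj[OF V _ det_one_plus_mult_adj_neq_0[OF L]] LL by simp
  have R_adj: "1\<^sub>m m + adj (U * R * adj U) = U * (1\<^sub>m m + adj R) * adj U"
    using dims R by (simp add: adj_mult3 one_plus_unitary_conj[OF U])
  have L_adj: "1\<^sub>m n + adj (V * L * adj V) = V * (1\<^sub>m n + adj L) * adj V"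
    using dims L by (simp add: adj_mult3 one_plus_unitary_conj[OF V])
  show ?thesis
    unfolding pinv_formula_def pinv_R_unitary_conj[OF X] pinv_L_unitary_conj[OF Y]
      pinv_core_unitary_conj[OF X Y] R_def[symmetric] L_def[symmetric]
    using dims D
    by (simp add: R_inv L_inv R_adj L_adj unitary_conj_mult[OF U] unitary_conj_mult[OF V] carrier_matD)
qed

lemma mp_pinv_unitary_conj_pinv_formula:
  assumes X: "X \<in> carrier_mat m m" "det X \<noteq> 0" and Y: "Y \<in> carrier_mat n n" "det Y \<noteq> 0"
    and pen: "penrose (X * D * Y) (pinv_formula D X Y)"
  shows "mp_pinv (U * X * adj U * (U * D * adj V) * (V * Y * adj V))
    = pinv_formula (U * D * adj V) (U * X * adj U) (V * Y * adj V)"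
proof -
  have "U * X * adj U * (U * D * adj V) * (V * Y * adj V) = U * (X * D * Y) * adj V"
    using U V X D Y by (simp add: unitary_conj_mult[OF U] unitary_conj_mult[OF V] carrier_matD)
  thus ?thesis
    unfolding pinv_formula_unitary_conj[OF X Y]
    using mp_pinv_unitary_conj[OF U V _ pinv_formula_carrier_mat[OF X Y] pen] X D Y by auto
qed

end

end

lemma rank_le_nr:
  assumes A: "(A :: complex mat) \<in> carrier_mat m n"
  shows "vec_space.rank m A \<le> m"
proof -
  interpret vec_space "TYPE(complex)" m .
  obtain S where S: "maximal S (\<lambda>T. T \<subseteq> set (cols A) \<and> lin_indpt T)"
    using maximal_exists[of "\<lambda>T. T \<subseteq> set (cols A) \<and> lin_indpt T" "card (set (cols A))" "{}"]
    by (meson List.finite_set card_mono empty_iff empty_subsetI finite_lin_indpt2 rev_finite_subset)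
  have "S \<subseteq> set (cols A)" and li: "lin_indpt S" using S by (metis maximal_def)+
  moreover have "set (cols A) \<subseteq> carrier_vec m" using A cols_dim by blast
  ultimately have "card S \<le> dim" using li_le_dim(2)[OF fin_dim _ li] by auto
  thus ?thesis using rank_card_indpt[OF A S] dim_is_n by simp
qed

lemma det_diagonal_mat_neq_0:
  assumes "A \<in> carrier_mat n n" "diagonal_mat A" "\<forall>i<n. A $$ (i, i) \<noteq> 0"
  shows "det (A :: complex mat) \<noteq> 0"
proof -
  have "upper_triangular A" using assms(1,2) unfolding upper_triangular_def diagonal_mat_def by auto
  hence "det A = prod_list (diag_mat A)" by (rule det_upper_triangular[OF _ assms(1)])
  moreover have "0 \<notin> set (diag_mat A)" using assms(1,3) unfolding diag_mat_def by auto
  ultimately show ?thesis by (simp add: prod_list_zero_iff)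
qed

lemma det_unitary_conj:
  assumes U: "unitary_mat U" "U \<in> carrier_mat n n" and A: "A \<in> carrier_mat n n"
  shows "det (U * A * adj U) = det A"
proof -
  have "det (U * A * adj U) = det A * (det U * det (adj U))"
    using U(2) A by (simp add: det_mult[of _ n] mult_ac)
  also have "det U * det (adj U) = 1"
    using det_mult[OF U(2) adj_carrier_mat[OF U(2)]] unitary_matD(1)[OF U] by simp
  finally show ?thesis by simp
qed

lemma det_diag_blocks_lower_triangular:
  assumes U: "unitary_mat U" "U \<in> carrier_mat (r + b) (r + b)"
    and A: "A \<in> carrier_mat r r" and B: "B \<in> carrier_mat b r" and C: "C \<in> carrier_mat b b"
    and inv: "invertible_mat (U * four_block_mat A (0\<^sub>m r b) B C * adj U)"
  shows "det A \<noteq> 0" "det C \<noteq> 0"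
proof -
  have T: "four_block_mat A (0\<^sub>m r b) B C \<in> carrier_mat (r + b) (r + b)" using A C by auto
  have "det (U * four_block_mat A (0\<^sub>m r b) B C * adj U) \<noteq> 0"
    using invertible_mat_det_neq_0[OF mult_carrier_mat[OF mult_carrier_mat[OF U(2) T] adj_carrier_mat[OF U(2)]] inv] .
  thus "det A \<noteq> 0" "det C \<noteq> 0"
    unfolding det_unitary_conj[OF U T] det_four_block_mat_upper_right_zero[OF A refl B C] by auto
qed

lemma det_diag_blocks_upper_triangular:
  assumes V: "unitary_mat V" "V \<in> carrier_mat (r + c) (r + c)"
    and A: "A \<in> carrier_mat r r" and B: "B \<in> carrier_mat r c" and C: "C \<in> carrier_mat c c"
    and inv: "invertible_mat (V * four_block_mat A B (0\<^sub>m c r) C * adj V)"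
  shows "det A \<noteq> 0" "det C \<noteq> 0"
proof -
  have T: "four_block_mat A B (0\<^sub>m c r) C \<in> carrier_mat (r + c) (r + c)" using A C by auto
  have "det (V * four_block_mat A B (0\<^sub>m c r) C * adj V) \<noteq> 0"
    using invertible_mat_det_neq_0[OF mult_carrier_mat[OF mult_carrier_mat[OF V(2) T] adj_carrier_mat[OF V(2)]] inv] .
  thus "det A \<noteq> 0" "det C \<noteq> 0"
    unfolding det_unitary_conj[OF V T] det_four_block_mat_lower_left_zero[OF A B refl C] by auto
qed

lemma mp_pinv_block_svd:
  assumes U: "unitary_mat U" "U \<in> carrier_mat (r + b) (r + b)"
    and V: "unitary_mat V" "V \<in> carrier_mat (r + c) (r + c)"
    and \<Sigma>: "\<Sigma> \<in> carrier_mat r r" "det \<Sigma> \<noteq> 0"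
    and X1: "X1 \<in> carrier_mat r r" "det X1 \<noteq> 0" and X2: "X2 \<in> carrier_mat b r"
    and X4: "X4 \<in> carrier_mat b b" "det X4 \<noteq> 0"
    and Y1: "Y1 \<in> carrier_mat r r" "det Y1 \<noteq> 0" and Y3: "Y3 \<in> carrier_mat r c"
    and Y4: "Y4 \<in> carrier_mat c c" "det Y4 \<noteq> 0"
  defines "N \<equiv> U * four_block_mat \<Sigma> (0\<^sub>m r c) (0\<^sub>m b r) (0\<^sub>m b c) * adj V"
    and "X \<equiv> U * four_block_mat X1 (0\<^sub>m r b) X2 X4 * adj U"
    and "Y \<equiv> V * four_block_mat Y1 Y3 (0\<^sub>m c r) Y4 * adj V"
  shows "mp_pinv (X * N * Y) =
     (1\<^sub>m (r + c) + adj (pinv_L N Y)) * minv (1\<^sub>m (r + c) + pinv_L N Y * adj (pinv_L N Y))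
     * mp_pinv N * N * (minv Y * mp_pinv N * minv X) * N * mp_pinv N
     * minv (1\<^sub>m (r + b) + adj (pinv_R N X) * pinv_R N X) * (1\<^sub>m (r + b) + adj (pinv_R N X))"
    (is "_ = ?rhs")
proof -
  define D where "D = four_block_mat \<Sigma> (0\<^sub>m r c) (0\<^sub>m b r) (0\<^sub>m b c)"
  define Dp where "Dp = four_block_mat (minv \<Sigma>) (0\<^sub>m r b) (0\<^sub>m c r) (0\<^sub>m c b)"
  define X' where "X' = four_block_mat X1 (0\<^sub>m r b) X2 X4"
  define Y' where "Y' = four_block_mat Y1 Y3 (0\<^sub>m c r) Y4"
  have D: "D \<in> carrier_mat (r + b) (r + c)" and Dp: "Dp \<in> carrier_mat (r + c) (r + b)"
    and X': "X' \<in> carrier_mat (r + b) (r + b)" and Y': "Y' \<in> carrier_mat (r + c) (r + c)"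
    unfolding D_def Dp_def X'_def Y'_def using \<Sigma> minv_inverse(1)[OF \<Sigma>] X1 X4 Y1 Y4 by auto
  have det_X': "det X' \<noteq> 0" and det_Y': "det Y' \<noteq> 0"
    unfolding X'_def Y'_def det_four_block_mat_upper_right_zero[OF X1(1) refl X2 X4(1)]
      det_four_block_mat_lower_left_zero[OF Y1(1) Y3 refl Y4(1)] using X1 X4 Y1 Y4 by auto
  have DDp: "penrose D Dp" unfolding D_def Dp_def by (rule penrose_diag_block[OF \<Sigma>])
  have "penrose (X' * D * Y') (pinv_formula D X' Y')"
    unfolding D_def X'_def Y'_def by (rule penrose_pinv_formula_block[OF \<Sigma> X1 X2 X4 Y1 Y3 Y4])
  hence "mp_pinv (X * N * Y) = pinv_formula N X Y"
    unfolding N_def X_def Y_def D_def[symmetric] X'_def[symmetric] Y'_def[symmetric]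
    by (rule mp_pinv_unitary_conj_pinv_formula[OF D Dp DDp U V X' det_X' Y' det_Y'])
  also have "\<dots> = ?rhs"
    unfolding N_def X_def Y_def D_def[symmetric] X'_def[symmetric] Y'_def[symmetric]
    using U V D Dp X' Y' det_X' det_Y' det_unitary_conj[OF U X'] det_unitary_conj[OF V Y']
    by (intro pinv_formula_expand[OF _ _ penrose_unitary_conj[OF U V D Dp DDp]]) auto
  finally show ?thesis .
qed

theorem theorem3p3:
  fixes m n r :: nat
    and N U V \<Sigma> X Y X1 X2 X4 Y1 Y3 Y4 :: "complex mat"
  assumes N: "N \<in> carrier_mat m n"
    and rank: "vec_space.rank m N = r"
    and Sigma: "\<Sigma> \<in> carrier_mat r r" "diagonal_mat \<Sigma>"
      "\<forall>i<r. \<exists>s::real. s > 0 \<and> \<Sigma> $$ (i, i) = complex_of_real s"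
    and U: "U \<in> carrier_mat m m" "unitary_mat U"
    and V: "V \<in> carrier_mat n n" "unitary_mat V"
    and svd: "N = U * four_block_mat \<Sigma> (0\<^sub>m r (n - r)) (0\<^sub>m (m - r) r) (0\<^sub>m (m - r) (n - r))
                 * mat_adjoint V"
    and X: "X \<in> carrier_mat m m" "invertible_mat X"
    and Y: "Y \<in> carrier_mat n n" "invertible_mat Y"
    and X1: "X1 \<in> carrier_mat r r" and X2: "X2 \<in> carrier_mat (m - r) r"
    and X4: "X4 \<in> carrier_mat (m - r) (m - r)"
    and Xblock: "X = U * four_block_mat X1 (0\<^sub>m r (m - r)) X2 X4 * mat_adjoint U"
    and Y1: "Y1 \<in> carrier_mat r r" and Y3: "Y3 \<in> carrier_mat r (n - r)"
    and Y4: "Y4 \<in> carrier_mat (n - r) (n - r)"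
    and Yblock: "Y = V * four_block_mat Y1 Y3 (0\<^sub>m (n - r) r) Y4 * mat_adjoint V"
  shows "let M = X * N * Y;
             R = X * E_proj N * minv X * (E_proj N - 1\<^sub>m m);
             L = (F_proj N - 1\<^sub>m n) * minv Y * F_proj N * Y
         in mp_pinv M =
            (1\<^sub>m n + mat_adjoint L) * minv (1\<^sub>m n + L * mat_adjoint L)
            * mp_pinv N * N * (minv Y * mp_pinv N * minv X) * N * mp_pinv N
            * minv (1\<^sub>m m + mat_adjoint R * R) * (1\<^sub>m m + mat_adjoint R)"
proof -
  have "r \<le> m" "r \<le> n" using rank_le_nr[OF N] vec_space.rank_le_nc[OF N] rank by auto
  then obtain b c where mb: "m = r + b" and nc: "n = r + c" using le_Suc_ex by metis
  have U': "unitary_mat U" "U \<in> carrier_mat (r + b) (r + b)"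
    and V': "unitary_mat V" "V \<in> carrier_mat (r + c) (r + c)"
    and X2': "X2 \<in> carrier_mat b r" and X4': "X4 \<in> carrier_mat b b"
    and Y3': "Y3 \<in> carrier_mat r c" and Y4': "Y4 \<in> carrier_mat c c"
    using U V X2 X4 Y3 Y4 unfolding mb nc by simp_all
  have det_\<Sigma>: "det \<Sigma> \<noteq> 0"
    using Sigma by (intro det_diagonal_mat_neq_0) force+
  have det_X: "det X1 \<noteq> 0" "det X4 \<noteq> 0"
    using det_diag_blocks_lower_triangular[OF U' X1 X2' X4'] X Xblock unfolding mb by auto
  have det_Y: "det Y1 \<noteq> 0" "det Y4 \<noteq> 0"
    using det_diag_blocks_upper_triangular[OF V' Y1 Y3' Y4'] Y Yblock unfolding nc by auto
  have N_eq: "N = U * four_block_mat \<Sigma> (0\<^sub>m r c) (0\<^sub>m b r) (0\<^sub>m b c) * adj V"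
    and X_eq: "X = U * four_block_mat X1 (0\<^sub>m r b) X2 X4 * adj U"
    and Y_eq: "Y = V * four_block_mat Y1 Y3 (0\<^sub>m c r) Y4 * adj V"
    using svd Xblock Yblock unfolding mb nc by simp_all
  from mp_pinv_block_svd[OF U' V' Sigma(1) det_\<Sigma> X1 det_X(1) X2' X4' det_X(2) Y1 det_Y(1) Y3' Y4' det_Y(2),
      folded N_eq X_eq Y_eq mb nc]
  show ?thesis
    unfolding Let_def pinv_R_def pinv_L_def carrier_matD[OF N] .
qed

end
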